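(* Under (H.1), (H.2), (H.3)$^*$, (H.4), (H.5), let $(Y^{t,\cdot,n},Z^{t,\cdot,n})$ be a subsequence of solutions of the truncated BSDE (T$_n$) such that $Y^{t,\cdot,n}\to Y^{t,\cdot}$ and $Z^{t,\cdot,n}\to Z^{t,\cdot}$ strongly in $L^2(\Omega\times[t,T];L^2_\rho)$, and $U^{t,\cdot,n}_s:=f_n(s,X^{t,\cdot}_s,Y^{t,\cdot,n}_s,Z^{t,\cdot,n}_s)$ converges weakly to $U^{t,\cdot}$ in $L^2(\Omega\times[t,T];L^2_\rho(\mathbb R^d;\mathbb R))$. Then $$U^{t,x}_s=f(s,X^{t,x}_s,Y^{t,x}_s,Z^{t,x}_s)\quad\text{for a.a. }s\in[t,T],\ x\in\mathbb R^d,\ \text{a.s.}$$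
   Context: Setting: $W$ a $d$-dimensional Brownian motion with augmented filtration; $\rho(x)=(1+|x|)^q$, $q>d$; $L^2_\rho(\mathbb R^d;\mathbb R^k)$ Borel functions with $\int|l|^2\rho^{-1}dx<\infty$. $X^{t,x}_s=x+\int_t^sb(X^{t,x}_r)dr+\int_t^s\sigma(X^{t,x}_r)dW_r$. Hypotheses with fixed $p\ge1$: (H.1) $\int|h|^{2p}\rho^{-1}dx<\infty$; (H.2) $|f(s,x,y,z)|\le C(|f_0(s,x)|+|y|^p+|z|)$, $\int_0^T\int|f_0|^{2p}\rho^{-1}dxds<\infty$; (H.3)$^*$ $(y_1-y_2)(f(s,x,y_1,z)-f(s,x,y_2,z))\le0$; (H.4) $(y,z)\mapsto f$ continuous and $L$-Lipschitz in $z$; (H.5) $b\in C^2_b$, $\sigma\in C^3_b$, $\sigma\sigma^*\ge DI$, $D>0$. Truncation: $\Pi_n(y)=\frac{\min(n,|y|)}{|y|}y$, $f_n(s,x,y,z)=f(s,x,\Pi_n(y),z)$; (T$_n$): $Y_s^{t,x,n}=h(X_T^{t,x})+\int_s^Tf_n(r,X_r^{t,x},Y_r^{t,x,n},Z_r^{t,x,n})dr-\int_s^T\langle Z_r^{t,x,n},dW_r\rangle$, uniquely solvable in $S^2([t,T];L^2_\rho)\otimes M^2([t,T];L^2_\rho)$. *)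

theory Defs
  imports "HOL-Probability.Probability"
begin

definition rho :: "real \<Rightarrow> 'n::real_normed_vector \<Rightarrow> real" where
  "rho q x = (1 + norm x) powr q"

definition Pi_trunc :: "nat \<Rightarrow> real \<Rightarrow> real" where
  "Pi_trunc n y = (min (real n) \<bar>y\<bar> / \<bar>y\<bar>) * y"

definition f_trunc ::
  "nat \<Rightarrow> (real \<Rightarrow> 'x \<Rightarrow> real \<Rightarrow> 'z \<Rightarrow> real) \<Rightarrow> real \<Rightarrow> 'x \<Rightarrow> real \<Rightarrow> 'z \<Rightarrow> real" where
  "f_trunc n f s x y z = f s x (Pi_trunc n y) z"

fun Cb :: "nat \<Rightarrow> ('a::euclidean_space \<Rightarrow> 'b::real_normed_vector) \<Rightarrow> bool" where
  "Cb 0 f = (continuous_on UNIV f \<and> bounded (range f))"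
| "Cb (Suc k) f = (continuous_on UNIV f \<and> bounded (range f) \<and>
     (\<exists>Df. (\<forall>x. (f has_derivative Df x) (at x)) \<and> (\<forall>e\<in>Basis. Cb k (\<lambda>x. Df x e))))"

definition nat_filt :: "'a measure \<Rightarrow> (real \<Rightarrow> 'a \<Rightarrow> real^'d) \<Rightarrow> real \<Rightarrow> 'a set set" where
  "nat_filt M W s = sigma_sets (space M)
     {W r -` B \<inter> space M | r B. 0 \<le> r \<and> r \<le> s \<and> B \<in> sets (borel :: (real^'d) measure)}"

definition bfilt :: "'a measure \<Rightarrow> (real \<Rightarrow> 'a \<Rightarrow> real^'d) \<Rightarrow> real \<Rightarrow> 'a measure" where
  "bfilt M W s = sigma (space M)
     ({W r -` B \<inter> space M | r B. 0 \<le> r \<and> r \<le> s \<and> B \<in> sets (borel :: (real^'d) measure)}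
      \<union> null_sets M)"

definition brownian :: "'a measure \<Rightarrow> (real \<Rightarrow> 'a \<Rightarrow> real^'d) \<Rightarrow> bool" where
  "brownian M W \<longleftrightarrow> prob_space M \<and>
     (\<forall>s. W s \<in> borel_measurable M) \<and>
     (\<forall>\<omega>\<in>space M. W 0 \<omega> = 0 \<and> continuous_on {0..} (\<lambda>s. W s \<omega>)) \<and>
     (\<forall>r s. 0 \<le> r \<and> r < s \<longrightarrow>
        (\<forall>u::real^'d. u \<noteq> 0 \<longrightarrow>
           distributed M lborel (\<lambda>\<omega>. u \<bullet> (W s \<omega> - W r \<omega>))
             (\<lambda>v. ennreal (normal_density 0 (sqrt (s - r) * norm u) v))) \<and>
        prob_space.indep_set M
          (sigma_sets (space M) {(\<lambda>\<omega>. W s \<omega> - W r \<omega>) -` B \<inter> space M | B. B \<in> sets (borel :: (real^'d) measure)})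
          (nat_filt M W r))"

definition simple_val :: "nat \<Rightarrow> (nat \<Rightarrow> real) \<Rightarrow> (nat \<Rightarrow> 'a \<Rightarrow> real^'d) \<Rightarrow> real \<Rightarrow> 'a \<Rightarrow> real^'d" where
  "simple_val m tp \<xi> r \<omega> = (\<Sum>i<m. if tp i < r \<and> r \<le> tp (Suc i) then \<xi> i \<omega> else 0)"

definition simple_int :: "(real \<Rightarrow> 'a \<Rightarrow> real^'d) \<Rightarrow> nat \<Rightarrow> (nat \<Rightarrow> real) \<Rightarrow> (nat \<Rightarrow> 'a \<Rightarrow> real^'d) \<Rightarrow> 'a \<Rightarrow> real" where
  "simple_int W m tp \<xi> \<omega> = (\<Sum>i<m. \<xi> i \<omega> \<bullet> (W (tp (Suc i)) \<omega> - W (tp i) \<omega>))"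

definition is_simple :: "'a measure \<Rightarrow> (real \<Rightarrow> 'a \<Rightarrow> real^'d) \<Rightarrow> real \<Rightarrow> real \<Rightarrow>
    nat \<Rightarrow> (nat \<Rightarrow> real) \<Rightarrow> (nat \<Rightarrow> 'a \<Rightarrow> real^'d) \<Rightarrow> bool" where
  "is_simple M W a b m tp \<xi> \<longleftrightarrow> tp 0 = a \<and> tp m = b \<and> (\<forall>i<m. tp i < tp (Suc i)) \<and>
     (\<forall>i<m. \<xi> i \<in> borel_measurable (bfilt M W (tp i)) \<and> (\<exists>B. \<forall>\<omega>\<in>space M. norm (\<xi> i \<omega>) \<le> B))"

text \<open>I is (a version of) the Ito integral of H over [a,b]: the L^2(M) limit of the
  elementary integrals of adapted simple processes approximating H in M^2.\<close>
definition ito_integral :: "'a measure \<Rightarrow> (real \<Rightarrow> 'a \<Rightarrow> real^'d) \<Rightarrow> real \<Rightarrow> real \<Rightarrow>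
    (real \<Rightarrow> 'a \<Rightarrow> real^'d) \<Rightarrow> ('a \<Rightarrow> real) \<Rightarrow> bool" where
  "ito_integral M W a b H I \<longleftrightarrow> a \<le> b \<and> I \<in> borel_measurable M \<and>
     (\<lambda>(\<omega>, r). H r \<omega>) \<in> borel_measurable (M \<Otimes>\<^sub>M restrict_space lborel {a..b}) \<and>
     (\<exists>m tp \<xi>. (\<forall>k. is_simple M W a b (m k) (tp k) (\<xi> k)) \<and>
        (\<lambda>k. \<integral>\<^sup>+ \<omega>. (\<integral>\<^sup>+ r. ennreal ((norm (simple_val (m k) (tp k) (\<xi> k) r \<omega> - H r \<omega>))\<^sup>2)
               \<partial>restrict_space lborel {a..b}) \<partial>M) \<longlonglongrightarrow> 0 \<and>
        (\<lambda>k. \<integral>\<^sup>+ \<omega>. ennreal ((simple_int W (m k) (tp k) (\<xi> k) \<omega> - I \<omega>)\<^sup>2) \<partial>M) \<longlonglongrightarrow> 0)"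

definition sde_sol :: "'a measure \<Rightarrow> (real \<Rightarrow> 'a \<Rightarrow> real^'d) \<Rightarrow> real \<Rightarrow> real \<Rightarrow>
    (real^'d \<Rightarrow> real^'d) \<Rightarrow> (real^'d \<Rightarrow> real^'d^'d) \<Rightarrow> real^'d \<Rightarrow> (real \<Rightarrow> 'a \<Rightarrow> real^'d) \<Rightarrow> bool" where
  "sde_sol M W t T b \<sigma> x X \<longleftrightarrow>
     (\<forall>s\<in>{t..T}. X s \<in> borel_measurable (bfilt M W s)) \<and>
     (\<forall>\<omega>\<in>space M. continuous_on {t..T} (\<lambda>s. X s \<omega>)) \<and>
     (\<forall>s\<in>{t..T}. \<exists>I :: 'a \<Rightarrow> real^'d.
        (\<forall>i. ito_integral M W t s (\<lambda>r \<omega>. (\<sigma> (X r \<omega>)) $ i) (\<lambda>\<omega>. I \<omega> $ i)) \<and>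
        (AE \<omega> in M. X s \<omega> = x + (\<integral> r. b (X r \<omega>) \<partial>restrict_space lborel {t..s}) + I \<omega>))"

definition dom_meas :: "'a measure \<Rightarrow> real \<Rightarrow> real \<Rightarrow> ('a \<times> real \<times> (real^'d)) measure" where
  "dom_meas M t T = M \<Otimes>\<^sub>M (restrict_space lborel {t..T} \<Otimes>\<^sub>M (lborel :: (real^'d) measure))"

definition wdom :: "real \<Rightarrow> 'a measure \<Rightarrow> real \<Rightarrow> real \<Rightarrow> ('a \<times> real \<times> (real^'d)) measure" where
  "wdom q M t T = density (dom_meas M t T) (\<lambda>(\<omega>, s, x). ennreal (1 / rho q x))"

definition unc :: "(real \<Rightarrow> real^'d \<Rightarrow> 'a \<Rightarrow> 'b) \<Rightarrow> 'a \<times> real \<times> (real^'d) \<Rightarrow> 'b" where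
  "unc Y = (\<lambda>(\<omega>, s, x). Y s x \<omega>)"

definition L2w :: "('c measure) \<Rightarrow> ('c \<Rightarrow> 'b::real_normed_vector) \<Rightarrow> bool" where
  "L2w \<mu> g \<longleftrightarrow> g \<in> borel_measurable \<mu> \<and> integrable \<mu> (\<lambda>z. (norm (g z))\<^sup>2)"

definition strong_conv :: "'c measure \<Rightarrow> (nat \<Rightarrow> 'c \<Rightarrow> 'b::real_normed_vector) \<Rightarrow> ('c \<Rightarrow> 'b) \<Rightarrow> bool" where
  "strong_conv \<mu> g g0 \<longleftrightarrow> (\<forall>k. L2w \<mu> (g k)) \<and> L2w \<mu> g0 \<and>
     (\<lambda>k. \<integral> z. (norm (g k z - g0 z))\<^sup>2 \<partial>\<mu>) \<longlonglongrightarrow> 0"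

definition weak_conv :: "'c measure \<Rightarrow> (nat \<Rightarrow> 'c \<Rightarrow> real) \<Rightarrow> ('c \<Rightarrow> real) \<Rightarrow> bool" where
  "weak_conv \<mu> g g0 \<longleftrightarrow> (\<forall>k. L2w \<mu> (g k)) \<and> L2w \<mu> g0 \<and>
     (\<forall>v. L2w \<mu> v \<longrightarrow> (\<lambda>k. \<integral> z. g k z * v z \<partial>\<mu>) \<longlonglongrightarrow> (\<integral> z. g0 z * v z \<partial>\<mu>))"

definition bsde_sol :: "real \<Rightarrow> 'a measure \<Rightarrow> (real \<Rightarrow> 'a \<Rightarrow> real^'d) \<Rightarrow> real \<Rightarrow> real \<Rightarrow>
    (real^'d \<Rightarrow> real \<Rightarrow> 'a \<Rightarrow> real^'d) \<Rightarrow> (real^'d \<Rightarrow> real) \<Rightarrow>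
    (real \<Rightarrow> real^'d \<Rightarrow> real \<Rightarrow> real^'d \<Rightarrow> real) \<Rightarrow>
    (real \<Rightarrow> real^'d \<Rightarrow> 'a \<Rightarrow> real) \<Rightarrow> (real \<Rightarrow> real^'d \<Rightarrow> 'a \<Rightarrow> real^'d) \<Rightarrow> bool" where
  "bsde_sol q M W t T X h g Y Z \<longleftrightarrow>
     unc Y \<in> borel_measurable (dom_meas M t T) \<and> unc Z \<in> borel_measurable (dom_meas M t T) \<and>
     (\<forall>s\<in>{t..T}. \<forall>x. (\<lambda>\<omega>. Y s x \<omega>) \<in> borel_measurable (bfilt M W s)) \<and>
     (\<integral>\<^sup>+ \<omega>. (\<Squnion>s\<in>{t..T}. \<integral>\<^sup>+ x. ennreal ((Y s x \<omega>)\<^sup>2 / rho q x) \<partial>lborel) \<partial>M) < \<infinity> \<and>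
     (AE \<omega> in M. \<forall>s0\<in>{t..T}.
        ((\<lambda>s. \<integral>\<^sup>+ x. ennreal ((Y s x \<omega> - Y s0 x \<omega>)\<^sup>2 / rho q x) \<partial>lborel) \<longlongrightarrow> 0)
          (at s0 within {t..T})) \<and>
     (\<integral>\<^sup>+ z. ennreal ((norm (unc Z z))\<^sup>2) \<partial>wdom q M t T) < \<infinity> \<and>
     (AE x in lborel. \<forall>s\<in>{t..T}. \<exists>I. ito_integral M W s T (\<lambda>r \<omega>. Z r x \<omega>) I \<and>
        (AE \<omega> in M. Y s x \<omega> = h (X x T \<omega>)
            + (\<integral> r. g r (X x r \<omega>) (Y r x \<omega>) (Z r x \<omega>) \<partial>restrict_space lborel {s..T})
            - I \<omega>))"

end

theory Submission
  imports Defs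
begin

text \<open>
  Strong convergence in the weighted space \<open>L\<^sup>2(\<Omega>\<times>[t,T]; L\<^sup>2_\<rho>)\<close>
  yields a subsequence along which \<open>Y\<^sup>n \<rightarrow> Y\<close> and \<open>Z\<^sup>n \<rightarrow> Z\<close> almost everywhere.
  Along it, the truncated drivers \<open>U\<^sup>n = f(s, X, \<Pi>\<^sub>n Y\<^sup>n, Z\<^sup>n)\<close> converge pointwise
  a.e. to \<open>f(s, X, Y, Z)\<close>: a convergent sequence \<open>Y\<^sup>n\<close> is bounded, so the truncation
  \<open>\<Pi>\<^sub>n\<close> is eventually the identity on it, and \<open>f\<close> is continuous in \<open>(y, z)\<close>.
  The remaining step is general measure theory: on a \<sigma>-finite space, a weak \<open>L\<^sup>2\<close>
  limit agrees a.e. with an a.e. pointwise limit.  This is shown by testing the weak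
  convergence against indicators of finite-measure sets on which the sequence is
  uniformly bounded (dominated convergence applies there).  Finally, the weighted
  measure has a strictly positive density w.r.t. \<open>P \<otimes> ds \<otimes> dx\<close>, so a.e.
  statements transfer to the unweighted product measure.  Of the hypotheses of the
  theorem, this step only needs continuity of \<open>f\<close> in \<open>(y, z)\<close> (H.4), the
  measurability assumptions and the three convergence assumptions.
\<close>

lemma L2w_diff_sq:
  fixes a b :: "'c \<Rightarrow> 'b::{banach,second_countable_topology}"
  assumes "L2w \<mu> a" "L2w \<mu> b"
  shows "integrable \<mu> (\<lambda>z. (norm (a z - b z))\<^sup>2)"
proof (rule Bochner_Integration.integrable_bound[where f="\<lambda>z. 2 * (norm (a z))\<^sup>2 + 2 * (norm (b z))\<^sup>2"])
  have [measurable]: "a \<in> borel_measurable \<mu>" "b \<in> borel_measurable \<mu>"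
    using assms by (auto simp: L2w_def)
  show "integrable \<mu> (\<lambda>z. 2 * (norm (a z))\<^sup>2 + 2 * (norm (b z))\<^sup>2)"
    using assms by (auto simp: L2w_def)
  show "(\<lambda>z. (norm (a z - b z))\<^sup>2) \<in> borel_measurable \<mu>" by measurable
  show "AE z in \<mu>. norm ((norm (a z - b z))\<^sup>2) \<le> norm (2 * (norm (a z))\<^sup>2 + 2 * (norm (b z))\<^sup>2)"
  proof (rule AE_I2)
    fix z
    have "(norm (a z - b z))\<^sup>2 \<le> (norm (a z) + norm (b z))\<^sup>2"
      using norm_triangle_ineq4 by (intro power_mono) auto
    also have "\<dots> \<le> 2 * (norm (a z))\<^sup>2 + 2 * (norm (b z))\<^sup>2"
      using sum_squares_ge_zero[of "norm (a z) - norm (b z)" 0]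
      by (simp add: power2_sum power2_diff algebra_simps power2_eq_square)
    finally show "norm ((norm (a z - b z))\<^sup>2) \<le> norm (2 * (norm (a z))\<^sup>2 + 2 * (norm (b z))\<^sup>2)"
      by simp
  qed
qed

lemma L2w_indicator:
  assumes "S \<in> sets \<mu>" "emeasure \<mu> S < \<infinity>"
  shows "L2w \<mu> (indicator S :: 'c \<Rightarrow> real)"
proof -
  have "(\<lambda>z. (norm (indicator S z :: real))\<^sup>2) = indicator S"
    by (auto simp: indicator_def fun_eq_iff)
  then show ?thesis
    using assms by (simp add: L2w_def)
qed

lemma L2w_times_indicator_integrable:
  fixes U :: "'c \<Rightarrow> real"
  assumes U: "L2w \<mu> U" and S: "S \<in> sets \<mu>" "emeasure \<mu> S < \<infinity>"
  shows "integrable \<mu> (\<lambda>z. U z * indicator S z)"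
proof (rule Bochner_Integration.integrable_bound[where f="\<lambda>z. (U z)\<^sup>2 + indicator S z"])
  have [measurable]: "U \<in> borel_measurable \<mu>" using U by (simp add: L2w_def)
  show "integrable \<mu> (\<lambda>z. (U z)\<^sup>2 + indicator S z)"
    using U S by (simp add: L2w_def)
  show "(\<lambda>z. U z * indicator S z) \<in> borel_measurable \<mu>"
    using S by measurable
  show "AE z in \<mu>. norm (U z * indicator S z) \<le> norm ((U z)\<^sup>2 + indicator S z)"
  proof (rule AE_I2)
    fix z
    have "0 \<le> (\<bar>U z\<bar> - 1)\<^sup>2" by simp
    moreover have "(\<bar>U z\<bar> - 1)\<^sup>2 = (U z)\<^sup>2 - 2 * \<bar>U z\<bar> + 1"
      by (simp add: power2_diff)
    ultimately have "\<bar>U z\<bar> \<le> (U z)\<^sup>2 + 1" by linarith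
    then show "norm (U z * indicator S z) \<le> norm ((U z)\<^sup>2 + indicator S z)"
      by (auto simp: indicator_def)
  qed
qed

lemma strong_conv_subseq:
  assumes "strong_conv \<mu> g g0" "strict_mono r"
  shows "strong_conv \<mu> (\<lambda>k. g (r k)) g0"
  using assms LIMSEQ_subseq_LIMSEQ[of _ 0 r]
  by (auto simp: strong_conv_def comp_def)

lemma weak_conv_subseq:
  assumes "weak_conv \<mu> g U" "strict_mono r"
  shows "weak_conv \<mu> (\<lambda>k. g (r k)) U"
  using assms LIMSEQ_subseq_LIMSEQ[of _ _ r]
  by (auto simp: weak_conv_def comp_def)

lemma weak_conv_uminus:
  assumes "weak_conv \<mu> g U"
  shows "weak_conv \<mu> (\<lambda>k z. - g k z) (\<lambda>z. - U z)"
  using assms unfolding weak_conv_def L2w_def by (auto intro: tendsto_minus)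

text \<open>Strong \<open>L\<^sup>2\<close> convergence implies a.e. convergence of a subsequence
  (Riesz), obtained from the \<open>L\<^sup>1\<close> version applied to \<open>|g\<^sub>k - g\<^sub>0|\<^sup>2\<close>.\<close>
lemma strong_conv_AE_subseq:
  fixes g :: "nat \<Rightarrow> 'c \<Rightarrow> 'b::{banach,second_countable_topology}"
  assumes conv: "strong_conv \<mu> g g0"
  obtains r where "strict_mono r" "AE z in \<mu>. (\<lambda>n. g (r n) z) \<longlonglongrightarrow> g0 z"
proof -
  let ?d = "\<lambda>k z. (norm (g k z - g0 z))\<^sup>2"
  have int: "integrable \<mu> (?d k)" for k
    using conv L2w_diff_sq by (auto simp: strong_conv_def)
  have "(\<lambda>k. \<integral>z. norm (?d k z) \<partial>\<mu>) \<longlonglongrightarrow> 0"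
    using conv by (simp add: strong_conv_def)
  from tendsto_L1_AE_subseq[OF int this] obtain r
    where r: "strict_mono r" and lim: "AE z in \<mu>. (\<lambda>n. ?d (r n) z) \<longlonglongrightarrow> 0" by blast
  have "AE z in \<mu>. (\<lambda>n. g (r n) z) \<longlonglongrightarrow> g0 z"
    using lim
  proof eventually_elim
    case (elim z)
    from tendsto_real_sqrt[OF this] have "(\<lambda>n. norm (g (r n) z - g0 z)) \<longlonglongrightarrow> 0"
      by simp
    then show ?case by (rule LIM_zero_cancel[OF tendsto_norm_zero_cancel])
  qed
  with r show thesis by (rule that)
qed

lemma Pi_trunc_id: "\<bar>y\<bar> \<le> real n \<Longrightarrow> Pi_trunc n y = y"
  by (cases "y = 0") (auto simp: Pi_trunc_def min_def)

text \<open>If \<open>y\<^sub>n \<rightarrow> y\<close> and \<open>z\<^sub>n \<rightarrow> z\<close> and \<open>F\<close> is jointly continuous, then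
  \<open>F(\<Pi>\<^bsub>\<psi> n\<^esub> y\<^sub>n, z\<^sub>n) \<rightarrow> F(y, z)\<close>: the bounded sequence \<open>y\<^sub>n\<close> is eventually
  left untouched by the truncation at levels \<open>\<psi> n \<rightarrow> \<infinity>\<close>.\<close>
lemma tendsto_truncated:
  fixes F :: "real \<Rightarrow> 'z::real_normed_vector \<Rightarrow> real"
  assumes psi: "strict_mono \<psi>" and y: "yn \<longlonglongrightarrow> y0" and z: "zn \<longlonglongrightarrow> z0"
    and cont: "continuous_on UNIV (\<lambda>(y, z). F y z)"
  shows "(\<lambda>n. F (Pi_trunc (\<psi> n) (yn n)) (zn n)) \<longlonglongrightarrow> F y0 z0"
proof -
  from convergent_imp_bounded[OF y] obtain B where B: "\<And>n. \<bar>yn n\<bar> \<le> B"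
    unfolding bounded_iff by auto
  obtain N :: nat where N: "B \<le> real N" using real_arch_simple by blast
  have trunc_eventually_id: "\<forall>\<^sub>F n in sequentially. F (yn n) (zn n) = F (Pi_trunc (\<psi> n) (yn n)) (zn n)"
  proof (rule eventually_sequentiallyI[of N])
    fix n assume "N \<le> n"
    then have "real N \<le> real (\<psi> n)" using seq_suble[OF psi, of n] by simp
    then show "F (yn n) (zn n) = F (Pi_trunc (\<psi> n) (yn n)) (zn n)"
      using B[of n] N by (simp add: Pi_trunc_id)
  qed
  have "(\<lambda>n. (\<lambda>(y, z). F y z) (yn n, zn n)) \<longlonglongrightarrow> (\<lambda>(y, z). F y z) (y0, z0)"
    by (rule continuous_on_tendsto_compose[OF cont tendsto_Pair[OF y z]]) auto
  then show ?thesis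
    using Lim_transform_eventually[OF _ trunc_eventually_id] by simp
qed

subsection \<open>Weak limits versus pointwise limits\<close>

text \<open>Test the weak convergence with the indicator of \<open>S = a \<inter> {|g\<^sub>k| \<le> K} \<inter> {G < U}\<close>;
  by dominated convergence the same integrals tend to \<open>\<integral>\<^sub>S G\<close>, so \<open>\<integral>\<^sub>S (U - G) = 0\<close>.\<close>
lemma weak_limit_le_pointwise_limit:
  fixes g :: "nat \<Rightarrow> 'c \<Rightarrow> real"
  assumes wk: "weak_conv \<mu> g U"
    and Gm[measurable]: "G \<in> borel_measurable \<mu>"
    and lim: "AE z in \<mu>. (\<lambda>k. g k z) \<longlonglongrightarrow> G z"
    and a[measurable]: "a \<in> sets \<mu>" and afin: "emeasure \<mu> a < \<infinity>"
  shows "AE z in \<mu>. z \<in> a \<longrightarrow> (\<forall>k. \<bar>g k z\<bar> \<le> K) \<longrightarrow> U z \<le> G z"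
proof -
  have [measurable]: "g k \<in> borel_measurable \<mu>" for k
    using wk by (simp add: weak_conv_def L2w_def)
  have UL: "L2w \<mu> U" and [measurable]: "U \<in> borel_measurable \<mu>"
    using wk by (simp_all add: weak_conv_def L2w_def)
  define S where "S = a \<inter> {z\<in>space \<mu>. (\<forall>k. \<bar>g k z\<bar> \<le> K) \<and> G z < U z}"
  have S[measurable]: "S \<in> sets \<mu>" unfolding S_def by measurable
  have Sfin: "emeasure \<mu> S < \<infinity>"
    using afin emeasure_mono[of S a \<mu>] by (auto simp: S_def less_le_trans)
  let ?v = "indicator S :: 'c \<Rightarrow> real"
  have Kint: "integrable \<mu> (\<lambda>z. K * ?v z)" using Sfin by simp
  have bnd: "\<And>k. AE z in \<mu>. norm (g k z * ?v z) \<le> K * ?v z"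
    by (auto simp: indicator_def S_def)
  have limv: "AE z in \<mu>. (\<lambda>k. g k z * ?v z) \<longlonglongrightarrow> G z * ?v z"
    using lim by eventually_elim (auto intro: tendsto_mult_right)
  have weak_lim: "(\<lambda>k. \<integral>z. g k z * ?v z \<partial>\<mu>) \<longlonglongrightarrow> (\<integral>z. U z * ?v z \<partial>\<mu>)"
    using wk L2w_indicator[OF S Sfin] by (simp add: weak_conv_def)
  have dominated_lim: "(\<lambda>k. \<integral>z. g k z * ?v z \<partial>\<mu>) \<longlonglongrightarrow> (\<integral>z. G z * ?v z \<partial>\<mu>)"
    by (rule integral_dominated_convergence[OF _ _ Kint limv bnd]) measurable
  have Gint: "integrable \<mu> (\<lambda>z. G z * ?v z)"
    by (rule integrable_dominated_convergence[OF _ _ Kint limv bnd]) measurable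
  have Uint: "integrable \<mu> (\<lambda>z. U z * ?v z)"
    by (rule L2w_times_indicator_integrable[OF UL S Sfin])
  have "(\<integral>z. (U z - G z) * ?v z \<partial>\<mu>) = 0"
    using LIMSEQ_unique[OF weak_lim dominated_lim] Uint Gint by (simp add: left_diff_distrib)
  moreover have "integrable \<mu> (\<lambda>z. (U z - G z) * ?v z)"
    using Uint Gint by (simp add: left_diff_distrib)
  moreover have "AE z in \<mu>. 0 \<le> (U z - G z) * ?v z"
    by (auto simp: indicator_def S_def)
  ultimately have "AE z in \<mu>. (U z - G z) * ?v z = 0"
    using integral_nonneg_eq_0_iff_AE by blast
  then show ?thesis
    by (rule AE_mp[OF _ AE_I2]) (auto simp: S_def indicator_def)
qed

text \<open>Apply the one-sided comparison to \<open>g\<close> and \<open>-g\<close> on the countably many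
  pairs (finite-measure piece \<open>a\<close>, integer bound \<open>K\<close>); every point where \<open>g\<^sub>k\<close>
  converges lies in some piece and has a bounded sequence \<open>g\<^sub>k\<close>.\<close>
lemma weak_limit_eq_pointwise_limit:
  fixes g :: "nat \<Rightarrow> 'c \<Rightarrow> real"
  assumes sf: "sigma_finite_measure \<mu>"
    and wk: "weak_conv \<mu> g U"
    and Gm: "G \<in> borel_measurable \<mu>"
    and lim: "AE z in \<mu>. (\<lambda>k. g k z) \<longlonglongrightarrow> G z"
  shows "AE z in \<mu>. U z = G z"
proof -
  obtain A where A: "countable A" "A \<subseteq> sets \<mu>" "\<Union>A = space \<mu>" "\<forall>a\<in>A. emeasure \<mu> a \<noteq> \<infinity>"
    using sigma_finite_measure.sigma_finite_countable[OF sf] by blast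
  have lim_neg: "AE z in \<mu>. (\<lambda>k. - g k z) \<longlonglongrightarrow> - G z"
    using lim by eventually_elim (rule tendsto_minus)
  have "AE z in \<mu>. z \<in> a \<longrightarrow> (\<forall>k. \<bar>g k z\<bar> \<le> real K) \<longrightarrow> U z = G z"
    if "a \<in> A" for a and K :: nat
  proof -
    have "AE z in \<mu>. z \<in> a \<longrightarrow> (\<forall>k. \<bar>g k z\<bar> \<le> real K) \<longrightarrow> U z \<le> G z"
      using weak_limit_le_pointwise_limit[OF wk Gm lim] A that by (auto simp: less_top)
    moreover have "AE z in \<mu>. z \<in> a \<longrightarrow> (\<forall>k. \<bar>- g k z\<bar> \<le> real K) \<longrightarrow> - U z \<le> - G z"
      using weak_limit_le_pointwise_limit[OF weak_conv_uminus[OF wk] _ lim_neg] Gm A that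
      by (auto simp: less_top)
    ultimately show ?thesis by eventually_elim auto
  qed
  then have "AE z in \<mu>. \<forall>a\<in>A. \<forall>K::nat. z \<in> a \<longrightarrow> (\<forall>k. \<bar>g k z\<bar> \<le> real K) \<longrightarrow> U z = G z"
    unfolding AE_ball_countable[OF A(1)] AE_all_countable by blast
  with lim AE_space show ?thesis
  proof eventually_elim
    case (elim z)
    from convergent_imp_bounded[OF elim(1)] obtain B where B: "\<And>k. \<bar>g k z\<bar> \<le> B"
      unfolding bounded_iff by auto
    obtain K :: nat where "B \<le> real K" using real_arch_simple by blast
    with B have "\<forall>k. \<bar>g k z\<bar> \<le> real K" by (meson order_trans)
    moreover obtain a where "a \<in> A" "z \<in> a" using elim(2) A(3) by blast
    ultimately show "U z = G z" using elim(3) by blast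
  qed
qed

subsection \<open>The weighted measure \<open>\<rho>\<^sup>-\<^sup>1 d(P \<otimes> ds \<otimes> dx)\<close>\<close>

lemma rho_pos: "0 < rho q x"
proof -
  have "0 < 1 + norm x" by (simp add: add_pos_nonneg)
  then show ?thesis unfolding rho_def by simp
qed

definition weight :: "real \<Rightarrow> 'a \<times> real \<times> (real^'d) \<Rightarrow> ennreal" where
  "weight q z = ennreal (1 / rho q (snd (snd z)))"

lemma wdom_eq_density: "wdom q M t T = density (dom_meas M t T) (weight q)"
  unfolding wdom_def weight_def by (simp add: case_prod_beta')

lemma weight_measurable: "weight q \<in> borel_measurable (dom_meas M t T)"
proof -
  have "(\<lambda>z. snd (snd z)) \<in> dom_meas M t T \<rightarrow>\<^sub>M lborel"
    unfolding dom_meas_def by (rule measurable_compose[OF measurable_snd measurable_snd])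
  moreover have "(\<lambda>x::real^'d. ennreal (1 / rho q x)) \<in> borel_measurable lborel"
    unfolding rho_def by measurable
  ultimately show ?thesis
    unfolding weight_def by (rule measurable_compose)
qed

text \<open>The weight is strictly positive, so null sets of the weighted measure are null
  sets of the product measure.\<close>
lemma AE_wdom_imp_AE_dom_meas:
  assumes "AE z in wdom q M t T. P z"
  shows "AE z in dom_meas M t T. P z"
proof -
  have "AE z in dom_meas M t T. 0 < weight q z \<longrightarrow> P z"
    using assms unfolding wdom_eq_density by (simp add: AE_density[OF weight_measurable])
  then show ?thesis
    by eventually_elim (simp add: weight_def rho_pos)
qed

text \<open>The weighted measure is \<sigma>-finite: the product measure is, and the weight is finite.\<close>
lemma sigma_finite_wdom:
  assumes "prob_space M"
  shows "sigma_finite_measure (wdom q M t T)"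
proof -
  have "sigma_finite_measure (dom_meas M t T)"
    unfolding dom_meas_def
    by (intro sigma_finite_pair_measure prob_space_imp_sigma_finite assms
        sigma_finite_measure_restrict_space sigma_finite_lborel) auto
  moreover have "AE z in dom_meas M t T. weight q z \<noteq> \<infinity>"
    by (simp add: weight_def)
  ultimately show ?thesis
    unfolding wdom_eq_density
    using sigma_finite_measure.sigma_finite_iff_density_finite[OF _ weight_measurable] by blast
qed

lemma driver_measurable:
  fixes f :: "real \<Rightarrow> 'y::second_countable_topology \<Rightarrow> real \<Rightarrow> 'z::second_countable_topology \<Rightarrow> real"
  assumes f_meas: "(\<lambda>(s, x, y, z). f s x y z) \<in> borel_measurable borel"
    and X_meas: "(\<lambda>(\<omega>, s, x). X x s \<omega>) \<in> borel_measurable (dom_meas M t T)"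
    and Y_meas: "unc Y \<in> borel_measurable (dom_meas M t T)"
    and Z_meas: "unc Z \<in> borel_measurable (dom_meas M t T)"
  shows "(\<lambda>(\<omega>, s, x). f s (X x s \<omega>) (Y s x \<omega>) (Z s x \<omega>)) \<in> borel_measurable (dom_meas M t T)"
proof -
  have "(\<lambda>w. fst (snd w)) \<in> dom_meas M t T \<rightarrow>\<^sub>M restrict_space lborel {t..T}"
    unfolding dom_meas_def by (rule measurable_compose[OF measurable_snd measurable_fst])
  moreover have "(\<lambda>s::real. s) \<in> restrict_space lborel {t..T} \<rightarrow>\<^sub>M borel"
    by (rule measurable_restrict_space1) simp
  ultimately have time_meas: "(\<lambda>w. fst (snd w)) \<in> borel_measurable (dom_meas M t T)"
    by (rule measurable_compose)
  have args_meas: "(\<lambda>w. (fst (snd w), (\<lambda>(\<omega>, s, x). X x s \<omega>) w, unc Y w, unc Z w))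
      \<in> borel_measurable (dom_meas M t T)"
    by (intro borel_measurable_Pair time_meas X_meas Y_meas Z_meas)
  have "(\<lambda>(\<omega>, s, x). f s (X x s \<omega>) (Y s x \<omega>) (Z s x \<omega>))
      = (\<lambda>w. (\<lambda>(s, x, y, z). f s x y z) (fst (snd w), (\<lambda>(\<omega>, s, x). X x s \<omega>) w, unc Y w, unc Z w))"
    by (auto simp: unc_def fun_eq_iff split: prod.splits)
  also have "\<dots> \<in> borel_measurable (dom_meas M t T)"
    by (rule measurable_compose[OF args_meas f_meas])
  finally show ?thesis .
qed

lemma truncated_driver_AE_limit:
  fixes f :: "real \<Rightarrow> 'y \<Rightarrow> real \<Rightarrow> 'z::real_normed_vector \<Rightarrow> real"
    and Yn :: "nat \<Rightarrow> real \<Rightarrow> real^'d \<Rightarrow> 'a \<Rightarrow> real"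
    and Zn :: "nat \<Rightarrow> real \<Rightarrow> real^'d \<Rightarrow> 'a \<Rightarrow> 'z"
  assumes cont: "\<And>s x. continuous_on UNIV (\<lambda>(y, z). f s x y z)"
    and psi: "strict_mono \<psi>"
    and Y: "AE w in \<mu>. (\<lambda>n. unc (Yn n) w) \<longlonglongrightarrow> unc Y w"
    and Z: "AE w in \<mu>. (\<lambda>n. unc (Zn n) w) \<longlonglongrightarrow> unc Z w"
  shows "AE w in \<mu>.
    (\<lambda>n. (\<lambda>(\<omega>, s, x). f_trunc (\<psi> n) f s (X x s \<omega>) (Yn n s x \<omega>) (Zn n s x \<omega>)) w)
      \<longlonglongrightarrow> (\<lambda>(\<omega>, s, x). f s (X x s \<omega>) (Y s x \<omega>) (Z s x \<omega>)) w"
  using Y Z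
proof eventually_elim
  case (elim w)
  obtain \<omega> s x where w: "w = (\<omega>, s, x)" by (cases w) auto
  from elim show ?case
    using tendsto_truncated[OF psi _ _ cont[of s "X x s \<omega>"],
        of "\<lambda>n. Yn n s x \<omega>" "Y s x \<omega>" "\<lambda>n. Zn n s x \<omega>" "Z s x \<omega>"]
    by (simp add: w unc_def f_trunc_def)
qed

theorem lemma4p7:
  fixes M :: "'a measure" and W :: "real \<Rightarrow> 'a \<Rightarrow> real^'d"
    and t T q p C L D :: real
    and h :: "real^'d \<Rightarrow> real"
    and f :: "real \<Rightarrow> real^'d \<Rightarrow> real \<Rightarrow> real^'d \<Rightarrow> real"
    and f0 :: "real \<Rightarrow> real^'d \<Rightarrow> real"
    and b :: "real^'d \<Rightarrow> real^'d" and \<sigma> :: "real^'d \<Rightarrow> real^'d^'d"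
    and X :: "real^'d \<Rightarrow> real \<Rightarrow> 'a \<Rightarrow> real^'d"
    and \<phi> :: "nat \<Rightarrow> nat"
    and Yn :: "nat \<Rightarrow> real \<Rightarrow> real^'d \<Rightarrow> 'a \<Rightarrow> real"
    and Zn :: "nat \<Rightarrow> real \<Rightarrow> real^'d \<Rightarrow> 'a \<Rightarrow> real^'d"
    and Y U :: "real \<Rightarrow> real^'d \<Rightarrow> 'a \<Rightarrow> real"
    and Z :: "real \<Rightarrow> real^'d \<Rightarrow> 'a \<Rightarrow> real^'d"
  assumes BM: "brownian M W"
    and tT: "0 \<le> t" "t \<le> T"
    and q: "q > real CARD('d)"
    and p: "p \<ge> 1"
    \<comment> \<open>(H.1)\<close>
    and h_meas: "h \<in> borel_measurable borel"
    and H1: "(\<integral>\<^sup>+ x. ennreal (\<bar>h x\<bar> powr (2 * p) / rho q x) \<partial>lborel) < \<infinity>"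
    \<comment> \<open>(H.2)\<close>
    and f_meas: "(\<lambda>(s, x, y, z). f s x y z) \<in> borel_measurable borel"
    and f0_meas: "(\<lambda>(s, x). f0 s x) \<in> borel_measurable borel"
    and H2_growth: "\<And>s x y z. \<bar>f s x y z\<bar> \<le> C * (\<bar>f0 s x\<bar> + \<bar>y\<bar> powr p + norm z)"
    and H2_int: "(\<integral>\<^sup>+ s. (\<integral>\<^sup>+ x. ennreal (\<bar>f0 s x\<bar> powr (2 * p) / rho q x) \<partial>lborel)
                   \<partial>restrict_space lborel {0..T}) < \<infinity>"
    \<comment> \<open>(H.3)*\<close>
    and H3: "\<And>s x y1 y2 z. (y1 - y2) * (f s x y1 z - f s x y2 z) \<le> 0"
    \<comment> \<open>(H.4)\<close>
    and H4_cont: "\<And>s x. continuous_on UNIV (\<lambda>(y, z). f s x y z)"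
    and H4_lip: "\<And>s x y z1 z2. \<bar>f s x y z1 - f s x y z2\<bar> \<le> L * norm (z1 - z2)"
    \<comment> \<open>(H.5)\<close>
    and H5_b: "Cb 2 b" and H5_\<sigma>: "Cb 3 \<sigma>" and D: "D > 0"
    and H5_ell: "\<And>x \<xi>. \<xi> \<bullet> ((\<sigma> x ** transpose (\<sigma> x)) *v \<xi>) \<ge> D * (norm \<xi>)\<^sup>2"
    \<comment> \<open>the forward diffusion X^{t,x}\<close>
    and X_sol: "\<And>x. sde_sol M W t T b \<sigma> x (X x)"
    and X_meas: "(\<lambda>(\<omega>, s, x). X x s \<omega>) \<in> borel_measurable (dom_meas M t T)"
    \<comment> \<open>a subsequence of solutions of (T_n)\<close>
    and sub: "strict_mono \<phi>"
    and sol: "\<And>k. bsde_sol q M W t T X h (f_trunc (\<phi> k) f) (Yn k) (Zn k)"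
    and convY: "strong_conv (wdom q M t T) (\<lambda>k. unc (Yn k)) (unc Y)"
    and convZ: "strong_conv (wdom q M t T) (\<lambda>k. unc (Zn k)) (unc Z)"
    and convU: "weak_conv (wdom q M t T)
                  (\<lambda>k. \<lambda>(\<omega>, s, x). f_trunc (\<phi> k) f s (X x s \<omega>) (Yn k s x \<omega>) (Zn k s x \<omega>))
                  (unc U)"
  shows "AE (\<omega>, s, x) in dom_meas M t T. U s x \<omega> = f s (X x s \<omega>) (Y s x \<omega>) (Z s x \<omega>)"
proof -
  let ?\<mu> = "wdom q M t T"
  define drv where "drv k = (\<lambda>(\<omega>, s, x). f_trunc (\<phi> k) f s (X x s \<omega>) (Yn k s x \<omega>) (Zn k s x \<omega>))" for k
  define G where "G = (\<lambda>(\<omega>, s, x). f s (X x s \<omega>) (Y s x \<omega>) (Z s x \<omega>))"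
  \<comment> \<open>a common subsequence along which \<open>Y\<^sup>n\<close> and \<open>Z\<^sup>n\<close> converge a.e.\<close>
  obtain r1 where r1: "strict_mono r1" and Y1: "AE w in ?\<mu>. (\<lambda>n. unc (Yn (r1 n)) w) \<longlonglongrightarrow> unc Y w"
    using strong_conv_AE_subseq[OF convY] by blast
  obtain r2 where r2: "strict_mono r2"
    and Z: "AE w in ?\<mu>. (\<lambda>n. unc (Zn (r1 (r2 n))) w) \<longlonglongrightarrow> unc Z w"
    using strong_conv_AE_subseq[OF strong_conv_subseq[OF convZ r1]] by blast
  have Y: "AE w in ?\<mu>. (\<lambda>n. unc (Yn (r1 (r2 n))) w) \<longlonglongrightarrow> unc Y w"
    using Y1 by eventually_elim (drule LIMSEQ_subseq_LIMSEQ[OF _ r2], simp add: comp_def)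
  have r: "strict_mono (\<lambda>n. r1 (r2 n))" using strict_mono_o[OF r1 r2] by (simp add: comp_def)
  have levels: "strict_mono (\<lambda>n. \<phi> (r1 (r2 n)))" using strict_mono_o[OF sub r] by (simp add: comp_def)
  \<comment> \<open>along it the drivers converge both weakly to \<open>U\<close> and pointwise to \<open>G\<close>\<close>
  have pointwise: "AE w in ?\<mu>. (\<lambda>n. drv (r1 (r2 n)) w) \<longlonglongrightarrow> G w"
    unfolding drv_def G_def by (rule truncated_driver_AE_limit[OF H4_cont levels Y Z])
  have weak: "weak_conv ?\<mu> (\<lambda>n. drv (r1 (r2 n))) (unc U)"
    using weak_conv_subseq[OF convU r] by (simp add: drv_def)
  have G_meas: "G \<in> borel_measurable ?\<mu>"
    using driver_measurable[OF f_meas X_meas] convY convZ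
    by (simp add: G_def wdom_eq_density strong_conv_def L2w_def)
  have "sigma_finite_measure ?\<mu>"
    using BM by (intro sigma_finite_wdom) (simp add: brownian_def)
  then have "AE w in ?\<mu>. unc U w = G w"
    by (rule weak_limit_eq_pointwise_limit[OF _ weak G_meas pointwise])
  from AE_wdom_imp_AE_dom_meas[OF this] show ?thesis
    by eventually_elim (auto simp: unc_def G_def)
qed

end
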